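(* Let $Q$ be the rate matrix of an irreducible BD process on $\mathcal{M}=\{0,1\}^k$ ($k\ge1$) that is reversible with respect to its limiting distribution $\pi$, with $\pi(m)>0$ for all $m$. For $\varepsilon>0$ with $\varepsilon\, q_i(m)<1$ for all $i,m$, let $(M^{(s)}_\varepsilon)_{s\ge 0}$ be the homogeneous discrete-time Markov chain with transition matrix $P_\varepsilon$ defined below. Then: (i) $(M^{(s)}_\varepsilon)$ is irreducible and aperiodic, so it has a unique stationary distribution $\pi_\varepsilon$, which is also its limiting distribution. (ii) For any vector norm $\|\cdot\|$ on $\mathbb{R}^{l}$, $\|\pi_\varepsilon-\pi\|=\mathcal{O}(\varepsilon)$ as $\varepsilon\to0$. (iii) For each $m\in\mathcal{M}$, let $W^\varepsilon_m$ be the number of iterations the chain started at $m$ takes to leave $m$ (so $\Pr(W^\varepsilon_m> n)=P_\varepsilon(m,m)^n$ for integers $n\ge0$). Then $\varepsilon W^\varepsilon_m$ converges in distribution as $\varepsilon\to0$ to an exponential random variable with rate $\lambda(m):=\sum_{i=1}^k q_i(m)$, i.e. the holding-time distribution of the BD process in state $m$. (iv) For $m\neq m'$, let $\widetilde P_\varepsilon(m,m')=P_\varepsilon(m,m')/(1-P_\varepsilon(m,m))$ be the probability that the chain moves to $m'$ given that it leaves $m$. Then $\lim_{\varepsilon\to0}\widetilde P_\varepsilon(m,m')=q_i(m)/\lambda(m)$ if $m'=m^i$ for some $i\in\{1,\dots,k\}$, and $\lim_{\varepsilon\to0}\widetilde P_\varepsilon(m,m')=0$ otherwise; these are the jump-chain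 transition probabilities of the BD process.
   Context: $\mathcal{M}=\{0,1\}^k$, $l=2^k$; for $m\in\mathcal{M}$, $m^i$ is $m$ with coordinate $i$ flipped. The BD process is the continuous-time Markov chain with rate matrix $Q(m,m^i)=q_i(m)\ge0$, $Q(m,m)=-\sum_{i=1}^k q_i(m)$, $Q(m,m')=0$ otherwise. Reversibility: $\pi(m)Q(m,m')=\pi(m')Q(m',m)$ for all $m,m'$. For models $m,m'$, $H_{m,m'}$ is the set of coordinates where they differ, and $$P_\varepsilon(m,m')=\prod_{i\in H_{m,m'}} \varepsilon\, q_i(m)\prod_{i\notin H_{m,m'}}\bigl(1-\varepsilon\, q_i(m)\bigr),$$ i.e. from state $m$ each coordinate $i$ is flipped independently with probability $\varepsilon q_i(m)$. Distributions on $\mathcal{M}$ are viewed as row vectors in $\mathbb{R}^l$. *)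

theory Defs
  imports "HOL-Probability.Probability" "HOL-Library.Landau_Symbols"
begin

text \<open>Coordinates are a finite type 'k (so k = CARD('k) >= 1); models are
  functions 'k => bool, i.e. elements of {0,1}^k.\<close>

definition flip :: "('k \<Rightarrow> bool) \<Rightarrow> 'k \<Rightarrow> ('k \<Rightarrow> bool)" where
  "flip m i = m(i := \<not> m i)"

definition bd_rate :: "('k::finite \<Rightarrow> ('k \<Rightarrow> bool) \<Rightarrow> real) \<Rightarrow> ('k \<Rightarrow> bool) \<Rightarrow> ('k \<Rightarrow> bool) \<Rightarrow> real" where
  "bd_rate q m m' =
     (if m' = m then - (\<Sum>i\<in>UNIV. q i m) else (\<Sum>i\<in>{i. m' = flip m i}. q i m))"

definition total_rate :: "('k::finite \<Rightarrow> ('k \<Rightarrow> bool) \<Rightarrow> real) \<Rightarrow> ('k \<Rightarrow> bool) \<Rightarrow> real" where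
  "total_rate q m = (\<Sum>i\<in>UNIV. q i m)"

definition ctmc_irreducible :: "('s \<Rightarrow> 's \<Rightarrow> real) \<Rightarrow> bool" where
  "ctmc_irreducible Q \<longleftrightarrow> (\<forall>m m'. (m, m') \<in> {(a, b). a \<noteq> b \<and> Q a b > 0}\<^sup>*)"

definition reversible :: "('s \<Rightarrow> 's \<Rightarrow> real) \<Rightarrow> ('s \<Rightarrow> real) \<Rightarrow> bool" where
  "reversible Q p \<longleftrightarrow> (\<forall>m m'. p m * Q m m' = p m' * Q m' m)"

definition P_eps :: "('k::finite \<Rightarrow> ('k \<Rightarrow> bool) \<Rightarrow> real) \<Rightarrow> real \<Rightarrow> ('k \<Rightarrow> bool) \<Rightarrow> ('k \<Rightarrow> bool) \<Rightarrow> real" where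
  "P_eps q \<epsilon> m m' =
     (\<Prod>i\<in>{i. m i \<noteq> m' i}. \<epsilon> * q i m) * (\<Prod>i\<in>{i. m i = m' i}. 1 - \<epsilon> * q i m)"

fun mat_pow :: "('s::finite \<Rightarrow> 's \<Rightarrow> real) \<Rightarrow> nat \<Rightarrow> 's \<Rightarrow> 's \<Rightarrow> real" where
  "mat_pow P 0 m m' = (if m = m' then 1 else 0)"
| "mat_pow P (Suc n) m m' = (\<Sum>x\<in>UNIV. mat_pow P n m x * P x m')"

definition dtmc_irreducible :: "('s::finite \<Rightarrow> 's \<Rightarrow> real) \<Rightarrow> bool" where
  "dtmc_irreducible P \<longleftrightarrow> (\<forall>m m'. \<exists>n. mat_pow P n m m' > 0)"

definition dtmc_aperiodic :: "('s::finite \<Rightarrow> 's \<Rightarrow> real) \<Rightarrow> bool" where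
  "dtmc_aperiodic P \<longleftrightarrow> (\<forall>m. Gcd {n. n > 0 \<and> mat_pow P n m m > 0} = (1::nat))"

definition stationary :: "('s::finite \<Rightarrow> 's \<Rightarrow> real) \<Rightarrow> ('s \<Rightarrow> real) \<Rightarrow> bool" where
  "stationary P p \<longleftrightarrow> (\<forall>m. p m \<ge> 0) \<and> (\<Sum>m\<in>UNIV. p m) = 1
      \<and> (\<forall>m'. (\<Sum>m\<in>UNIV. p m * P m m') = p m')"

definition stat_dist :: "('s::finite \<Rightarrow> 's \<Rightarrow> real) \<Rightarrow> ('s \<Rightarrow> real)" where
  "stat_dist P = (THE p. stationary P p)"

definition limiting :: "('s::finite \<Rightarrow> 's \<Rightarrow> real) \<Rightarrow> ('s \<Rightarrow> real) \<Rightarrow> bool" where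
  "limiting P p \<longleftrightarrow> (\<forall>m m'. (\<lambda>n. mat_pow P n m m') \<longlonglongrightarrow> p m')"

definition is_vnorm :: "(('s \<Rightarrow> real) \<Rightarrow> real) \<Rightarrow> bool" where
  "is_vnorm N \<longleftrightarrow> (\<forall>x. N x \<ge> 0) \<and> (\<forall>x. N x = 0 \<longleftrightarrow> x = (\<lambda>_. 0))
     \<and> (\<forall>c x. N (\<lambda>m. c * x m) = \<bar>c\<bar> * N x) \<and> (\<forall>x y. N (\<lambda>m. x m + y m) \<le> N x + N y)"

text \<open>Convergence in distribution along a filter (CDF convergence at continuity points),
  the filter version of weak_conv_m.\<close>
definition weak_conv_filter :: "('a \<Rightarrow> real measure) \<Rightarrow> real measure \<Rightarrow> 'a filter \<Rightarrow> bool" where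
  "weak_conv_filter Mf M F \<longleftrightarrow>
     (\<forall>x. isCont (cdf M) x \<longrightarrow> ((\<lambda>e. cdf (Mf e) x) \<longlongrightarrow> cdf M x) F)"

text \<open>Law of W: number of iterations to leave m; W = 1 + Geometric(1 - P(m,m)),
  so Pr(W > n) = P(m,m)^n. Law of eps * W as a Borel measure on the reals.\<close>
definition scaled_holding_law :: "('k::finite \<Rightarrow> ('k \<Rightarrow> bool) \<Rightarrow> real) \<Rightarrow> real \<Rightarrow> ('k \<Rightarrow> bool) \<Rightarrow> real measure" where
  "scaled_holding_law q \<epsilon> m =
     distr (measure_pmf (geometric_pmf (1 - P_eps q \<epsilon> m m))) borel (\<lambda>n. \<epsilon> * real (Suc n))"

definition jump_prob :: "('k::finite \<Rightarrow> ('k \<Rightarrow> bool) \<Rightarrow> real) \<Rightarrow> real \<Rightarrow> ('k \<Rightarrow> bool) \<Rightarrow> ('k \<Rightarrow> bool) \<Rightarrow> real" where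
  "jump_prob q \<epsilon> m m' = P_eps q \<epsilon> m m' / (1 - P_eps q \<epsilon> m m)"

end

theory Submission
  imports Defs
begin

text \<open>For small \<epsilon> the discrete chain is P_eps = I + \<epsilon> Q + O(\<epsilon>^2) entrywise and has a positive
  diagonal. Irreducibility of Q therefore carries over to P_eps, some power of P_eps is bounded below
  entrywise, and Doeblin's contraction yields a unique stationary distribution which is also limiting.
  A stationary \<pi>_\<epsilon> of P_eps satisfies \<pi>_\<epsilon> Q = O(\<epsilon>), whereas \<pi> Q = 0 by reversibility. Reversibility
  and irreducibility leave no nonzero zero-sum vector in the left kernel of Q, so d \<mapsto> d Q is bounded
  below on zero-sum vectors and \<pi>_\<epsilon> - \<pi> = O(\<epsilon>). Finally 1 - P_eps(m,m) = \<epsilon> \<lambda>(m) + O(\<epsilon>^2) and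
  P_eps(m,m') = \<epsilon> Q(m,m') + O(\<epsilon>^2) for m' \<noteq> m: the first makes the geometric holding time, scaled
  by \<epsilon>, converge to the exponential law with rate \<lambda>(m), and the ratio of the two gives the jump
  probabilities.\<close>

section \<open>Finite stochastic matrices\<close>

definition stochastic :: "('s::finite \<Rightarrow> 's \<Rightarrow> real) \<Rightarrow> bool" where
  "stochastic P \<longleftrightarrow> (\<forall>a b. 0 \<le> P a b) \<and> (\<forall>a. (\<Sum>b\<in>UNIV. P a b) = 1)"

lemma stochastic_nonneg: "stochastic P \<Longrightarrow> 0 \<le> P a b"
  by (simp add: stochastic_def)

lemma stochastic_row_sum: "stochastic P \<Longrightarrow> (\<Sum>b\<in>UNIV. P a b) = 1"
  by (simp add: stochastic_def)

lemma stochastic_le_1: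
  assumes "stochastic P" shows "P a b \<le> 1"
proof -
  have "P a b \<le> (\<Sum>c\<in>UNIV. P a c)"
    by (rule member_le_sum) (auto intro: stochastic_nonneg[OF assms])
  then show ?thesis using stochastic_row_sum[OF assms] by simp
qed

lemma sum_indicator_mult:
  fixes f :: "'s::finite \<Rightarrow> real"
  shows "(\<Sum>x\<in>UNIV. (if a = x then 1 else 0) * f x) = f a"
proof -
  have "(\<Sum>x\<in>UNIV. (if a = x then 1 else 0) * f x) = (\<Sum>x\<in>UNIV. if x = a then f x else 0)"
    by (rule sum.cong) auto
  then show ?thesis by simp
qed

lemma mat_pow_add: "mat_pow P (n + k) a b = (\<Sum>x\<in>UNIV. mat_pow P n a x * mat_pow P k x b)"
proof (induction k arbitrary: b)
  case 0
  show ?case by (simp add: if_distrib cong: if_cong)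
next
  case (Suc k)
  have "mat_pow P (n + Suc k) a b = (\<Sum>y\<in>UNIV. \<Sum>x\<in>UNIV. mat_pow P n a x * mat_pow P k x y * P y b)"
    by (simp add: Suc sum_distrib_right)
  also have "\<dots> = (\<Sum>x\<in>UNIV. mat_pow P n a x * (\<Sum>y\<in>UNIV. mat_pow P k x y * P y b))"
    by (subst sum.swap) (simp add: sum_distrib_left mult.assoc)
  finally show ?case by simp
qed

lemma stochastic_mat_pow:
  assumes "stochastic P" shows "stochastic (mat_pow P n)"
proof (induction n)
  case 0
  show ?case by (simp add: stochastic_def)
next
  case (Suc n)
  have "(\<Sum>b\<in>UNIV. mat_pow P (Suc n) a b) = (\<Sum>x\<in>UNIV. mat_pow P n a x * (\<Sum>b\<in>UNIV. P x b))" for a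
    by (simp add: sum_distrib_left) (rule sum.swap)
  then show ?case
    using Suc assms
    by (auto simp: stochastic_def stochastic_row_sum intro!: sum_nonneg mult_nonneg_nonneg)
qed

lemma mat_pow_Suc_ge:
  assumes "stochastic P"
  shows "mat_pow P n a c * P c b \<le> mat_pow P (Suc n) a b"
  unfolding mat_pow.simps
  using stochastic_nonneg[OF assms] stochastic_nonneg[OF stochastic_mat_pow[OF assms]]
  by (intro member_le_sum[where f = "\<lambda>x. mat_pow P n a x * P x b"]) auto

lemma mat_pow_pos_mono:
  assumes P: "stochastic P" and diag: "\<And>a. 0 < P a a"
    and pos: "0 < mat_pow P n a b" and "n \<le> n'"
  shows "0 < mat_pow P n' a b"
  using \<open>n \<le> n'\<close>
proof (induction n' rule: dec_induct)
  case base
  show ?case by (rule pos)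
next
  case (step n')
  have "0 < mat_pow P n' a b * P b b" using step.IH diag by simp
  also have "\<dots> \<le> mat_pow P (Suc n') a b"
    by (rule mat_pow_Suc_ge[OF P])
  finally show ?case .
qed

lemma uniform_minorisation:
  assumes P: "stochastic P" and diag: "\<And>a. 0 < P a a" and irr: "dtmc_irreducible P"
  shows "\<exists>N d. 0 < N \<and> 0 < d \<and> (\<forall>a b. d \<le> mat_pow P N a b)"
proof -
  obtain n where n: "\<And>a b. 0 < mat_pow P (n a b) a b"
    using irr unfolding dtmc_irreducible_def by metis
  define N where "N = Suc (Max (range (case_prod n)))"
  have N: "0 < mat_pow P N a b" for a b
  proof (rule mat_pow_pos_mono[OF P diag n])
    have "case_prod n (a, b) \<le> Max (range (case_prod n))" by (rule Max_ge) auto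
    then show "n a b \<le> N" by (simp add: N_def)
  qed
  define d where "d = Min (range (case_prod (mat_pow P N)))"
  have "d \<in> range (case_prod (mat_pow P N))" unfolding d_def by (rule Min_in) auto
  then have "0 < d" using N by auto
  moreover have "d \<le> mat_pow P N a b" for a b
    unfolding d_def by (rule Min_le) (auto intro: image_eqI[where x = "(a, b)"])
  moreover have "0 < N" by (simp add: N_def)
  ultimately show ?thesis by blast
qed

lemma nonneg_weighted_sums_diff_le:
  fixes a b f :: "'s::finite \<Rightarrow> real"
  assumes a: "\<And>x. 0 \<le> a x" and b: "\<And>x. 0 \<le> b x"
    and sa: "sum a UNIV = s" and sb: "sum b UNIV = s"
    and fD: "\<And>x y. \<bar>f x - f y\<bar> \<le> D"
  shows "\<bar>(\<Sum>x\<in>UNIV. a x * f x) - (\<Sum>x\<in>UNIV. b x * f x)\<bar> \<le> s * D"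
proof -
  have left: "(\<Sum>x\<in>UNIV. \<Sum>y\<in>UNIV. a x * b y * f x) = s * (\<Sum>x\<in>UNIV. a x * f x)"
  proof -
    have "(\<Sum>x\<in>UNIV. \<Sum>y\<in>UNIV. a x * b y * f x) = (\<Sum>x\<in>UNIV. a x * f x * (\<Sum>y\<in>UNIV. b y))"
      by (simp add: sum_distrib_left mult_ac)
    then show ?thesis by (simp add: sb sum_distrib_left mult_ac)
  qed
  have right: "(\<Sum>x\<in>UNIV. \<Sum>y\<in>UNIV. a x * b y * f y) = s * (\<Sum>y\<in>UNIV. b y * f y)"
  proof -
    have "(\<Sum>x\<in>UNIV. \<Sum>y\<in>UNIV. a x * b y * f y) = (\<Sum>y\<in>UNIV. b y * f y * (\<Sum>x\<in>UNIV. a x))"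
      by (subst sum.swap) (simp add: sum_distrib_left mult_ac)
    then show ?thesis by (simp add: sa sum_distrib_left mult_ac)
  qed
  have "s * ((\<Sum>x\<in>UNIV. a x * f x) - (\<Sum>y\<in>UNIV. b y * f y))
      = (\<Sum>x\<in>UNIV. \<Sum>y\<in>UNIV. a x * b y * (f x - f y))"
    by (simp add: right_diff_distrib sum_subtractf left right)
  also have "\<bar>\<dots>\<bar> \<le> (\<Sum>x\<in>UNIV. \<Sum>y\<in>UNIV. a x * b y * D)"
    using a b fD
    by (intro order_trans[OF sum_abs] sum_mono order_trans[OF sum_abs])
       (simp add: abs_mult mult_left_mono)
  also have "\<dots> = s * s * D"
    by (simp add: sum_distrib_left[symmetric] sum_distrib_right[symmetric] sa sb)
  finally have "\<bar>s\<bar> * \<bar>(\<Sum>x\<in>UNIV. a x * f x) - (\<Sum>y\<in>UNIV. b y * f y)\<bar> \<le> s * s * D"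
    by (simp only: abs_mult)
  moreover have "0 \<le> s" using sa a by (metis sum_nonneg)
  moreover have "(\<Sum>x\<in>UNIV. a x * f x) - (\<Sum>y\<in>UNIV. b y * f y) = 0" if "s = 0"
    using that sa sb a b by (simp add: sum_nonneg_eq_0_iff)
  ultimately show ?thesis
    by (cases "s = 0") (auto simp: mult.assoc mult_le_cancel_left_pos)
qed

text \<open>Dobrushin's contraction: both rows keep the common mass d at every point, so only the
  remaining mass 1 - CARD('s) * d sees the oscillation of f.\<close>
lemma weighted_sums_diff_le:
  fixes a b f :: "'s::finite \<Rightarrow> real"
  assumes ad: "\<And>x. d \<le> a x" and bd: "\<And>x. d \<le> b x"
    and sa: "sum a UNIV = 1" and sb: "sum b UNIV = 1"
    and fD: "\<And>x y. \<bar>f x - f y\<bar> \<le> D"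
  shows "\<bar>(\<Sum>x\<in>UNIV. a x * f x) - (\<Sum>x\<in>UNIV. b x * f x)\<bar> \<le> (1 - real CARD('s) * d) * D"
proof -
  have "\<bar>(\<Sum>x\<in>UNIV. (a x - d) * f x) - (\<Sum>x\<in>UNIV. (b x - d) * f x)\<bar> \<le> (1 - real CARD('s) * d) * D"
    using ad bd sa sb fD by (intro nonneg_weighted_sums_diff_le) (auto simp: sum_subtractf)
  then show ?thesis
    by (simp add: left_diff_distrib sum_subtractf)
qed

lemma mat_pow_oscillation_le:
  fixes P :: "'s::finite \<Rightarrow> 's \<Rightarrow> real"
  assumes P: "stochastic P" and minor: "\<And>a b. d \<le> mat_pow P N a b" and N: "0 < N"
  shows "\<bar>mat_pow P n a c - mat_pow P n b c\<bar> \<le> (1 - real CARD('s) * d) ^ (n div N)"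
proof (induction n arbitrary: a b rule: less_induct)
  case (less n)
  show ?case
  proof (cases "n < N")
    case True
    have bounds: "0 \<le> mat_pow P n x c \<and> mat_pow P n x c \<le> 1" for x
      using stochastic_mat_pow[OF P] by (simp add: stochastic_nonneg stochastic_le_1)
    have "\<bar>mat_pow P n a c - mat_pow P n b c\<bar> \<le> 1"
      using bounds[of a] bounds[of b] by (simp add: abs_le_iff)
    then show ?thesis using True by simp
  next
    case False
    define k where "k = n - N"
    have n: "n = N + k" using False by (simp add: k_def)
    have div: "(N + k) div N = Suc (k div N)" using N by simp
    have IH: "\<bar>mat_pow P k x c - mat_pow P k y c\<bar> \<le> (1 - real CARD('s) * d) ^ (k div N)" for x y
      using less[of k] n N by simp
    have rows: "sum (mat_pow P N x) UNIV = 1" for x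
      using stochastic_row_sum[OF stochastic_mat_pow[OF P]] .
    have "\<bar>(\<Sum>x\<in>UNIV. mat_pow P N a x * mat_pow P k x c) - (\<Sum>x\<in>UNIV. mat_pow P N b x * mat_pow P k x c)\<bar>
        \<le> (1 - real CARD('s) * d) * (1 - real CARD('s) * d) ^ (k div N)"
      by (rule weighted_sums_diff_le[OF minor minor rows rows IH])
    then show ?thesis unfolding div n mat_pow_add by simp
  qed
qed

lemma mat_pow_shift_diff_le:
  fixes P :: "'s::finite \<Rightarrow> 's \<Rightarrow> real"
  assumes P: "stochastic P" and osc: "\<And>a b. \<bar>mat_pow P n a c - mat_pow P n b c\<bar> \<le> B"
  shows "\<bar>mat_pow P (k + n) a c - mat_pow P n a c\<bar> \<le> B"
proof -
  have "\<bar>(\<Sum>x\<in>UNIV. mat_pow P k a x * mat_pow P n x c) - (\<Sum>x\<in>UNIV. mat_pow P 0 a x * mat_pow P n x c)\<bar>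
      \<le> (1 - real CARD('s) * 0) * B"
    using stochastic_mat_pow[OF P]
    by (intro weighted_sums_diff_le[OF _ _ _ _ osc]) (simp_all add: stochastic_nonneg stochastic_row_sum)
  then show ?thesis by (simp add: mat_pow_add[symmetric] sum_indicator_mult)
qed

lemma Cauchy_if_tail_bound:
  fixes u :: "nat \<Rightarrow> real"
  assumes tail: "\<And>n k. \<bar>u (n + k) - u n\<bar> \<le> e n" and e: "e \<longlonglongrightarrow> 0"
  shows "Cauchy u"
proof (rule CauchyI)
  fix r :: real assume "0 < r"
  then have "eventually (\<lambda>n. e n < r / 2) sequentially"
    by (intro order_tendstoD(2)[OF e]) simp
  then obtain M where M: "e M < r / 2"
    by (auto simp: eventually_sequentially)
  have close: "\<bar>u m - u M\<bar> \<le> e M" if "M \<le> m" for m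
    using tail[of M "m - M"] that by simp
  show "\<exists>M. \<forall>m\<ge>M. \<forall>n\<ge>M. norm (u m - u n) < r"
  proof (intro exI allI impI)
    fix m n assume "M \<le> m" "M \<le> n"
    then show "norm (u m - u n) < r"
      using close[of m] close[of n] M by (auto simp: abs_le_iff abs_less_iff)
  qed
qed

lemma limiting_if_minorised:
  fixes P :: "'s::finite \<Rightarrow> 's \<Rightarrow> real"
  assumes P: "stochastic P" and minor: "\<And>a b. d \<le> mat_pow P N a b" and d: "0 < d" and N: "0 < N"
  shows "\<exists>p. limiting P p"
proof -
  define r where "r = 1 - real CARD('s) * d"
  have "real CARD('s) * d = (\<Sum>b\<in>(UNIV :: 's set). d)" by simp
  also have "\<dots> \<le> (\<Sum>b\<in>UNIV. mat_pow P N undefined b)" by (rule sum_mono) (rule minor)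
  also have "\<dots> = 1" by (rule stochastic_row_sum[OF stochastic_mat_pow[OF P]])
  finally have r: "\<bar>r\<bar> < 1"
    using d by (simp add: r_def abs_less_iff)
  have decay: "(\<lambda>n. r ^ (n div N)) \<longlonglongrightarrow> 0"
    by (rule filterlim_compose[OF LIMSEQ_power_zero filterlim_at_top_div_const_nat]) (use r N in auto)
  have osc: "\<bar>mat_pow P n a c - mat_pow P n b c\<bar> \<le> r ^ (n div N)" for n a b c
    unfolding r_def by (rule mat_pow_oscillation_le[OF P minor N])
  have tail: "\<bar>mat_pow P (n + k) a c - mat_pow P n a c\<bar> \<le> r ^ (n div N)" for n k a c
    using mat_pow_shift_diff_le[OF P osc, of k n a] by (simp add: add.commute)
  have "Cauchy (\<lambda>n. mat_pow P n a c)" for a c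
    by (rule Cauchy_if_tail_bound[OF tail decay])
  then have "convergent (\<lambda>n. mat_pow P n a c)" for a c
    by (simp add: Cauchy_convergent_iff)
  define p where "p a c = lim (\<lambda>n. mat_pow P n a c)" for a c
  have p: "(\<lambda>n. mat_pow P n a c) \<longlonglongrightarrow> p a c" for a c
    using \<open>convergent _\<close> by (simp add: p_def convergent_LIMSEQ_iff)
  have "(\<lambda>n. mat_pow P n a c - mat_pow P n b c) \<longlonglongrightarrow> 0" for a b c
    by (rule Lim_null_comparison[OF _ decay]) (simp add: osc)
  then have "p a c - p b c = 0" for a b c
    by (rule LIMSEQ_unique[OF tendsto_diff[OF p p]])
  then have same_limit: "p a c = p b c" for a b c
    by simp
  have "limiting P (p undefined)"
    unfolding limiting_def
  proof (intro allI)
    fix a c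
    show "(\<lambda>n. mat_pow P n a c) \<longlonglongrightarrow> p undefined c"
      using p[of a c] same_limit[of a c undefined] by simp
  qed
  then show ?thesis by blast
qed

lemma stationary_mat_pow:
  assumes "stationary P p" shows "(\<Sum>a\<in>UNIV. p a * mat_pow P n a c) = p c"
proof (induction n arbitrary: c)
  case 0
  show ?case by (simp add: if_distrib cong: if_cong)
next
  case (Suc n)
  have "(\<Sum>a\<in>UNIV. p a * mat_pow P (Suc n) a c) = (\<Sum>x\<in>UNIV. (\<Sum>a\<in>UNIV. p a * mat_pow P n a x) * P x c)"
    by (simp add: sum_distrib_left sum_distrib_right mult.assoc) (rule sum.swap)
  then show ?case using Suc assms by (simp add: stationary_def)
qed

lemma stationary_if_limiting:
  assumes P: "stochastic P" and lim: "limiting P p"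
  shows "stationary P p"
proof -
  have p: "(\<lambda>n. mat_pow P n undefined c) \<longlonglongrightarrow> p c" for c
    using lim by (simp add: limiting_def)
  have "0 \<le> p c" for c
    by (rule LIMSEQ_le_const[OF p]) (simp add: stochastic_nonneg[OF stochastic_mat_pow[OF P]])
  moreover have "(\<lambda>n. \<Sum>c\<in>UNIV. mat_pow P n undefined c) \<longlonglongrightarrow> (\<Sum>c\<in>UNIV. p c)"
    by (intro tendsto_sum p)
  then have "(\<Sum>c\<in>UNIV. p c) = 1"
    using stochastic_row_sum[OF stochastic_mat_pow[OF P]] by (simp add: LIMSEQ_const_iff)
  moreover have "(\<Sum>a\<in>UNIV. p a * P a c) = p c" for c
  proof (rule LIMSEQ_unique)
    show "(\<lambda>n. mat_pow P (Suc n) undefined c) \<longlonglongrightarrow> (\<Sum>a\<in>UNIV. p a * P a c)"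
      unfolding mat_pow.simps by (intro tendsto_sum tendsto_mult_right p)
    show "(\<lambda>n. mat_pow P (Suc n) undefined c) \<longlonglongrightarrow> p c"
      using p by (rule LIMSEQ_Suc)
  qed
  ultimately show ?thesis by (simp add: stationary_def)
qed

lemma stationary_unique_if_limiting:
  assumes lim: "limiting P p" and st: "stationary P p'"
  shows "p' = p"
proof
  fix c
  have "(\<lambda>n. mat_pow P n a c) \<longlonglongrightarrow> p c" for a
    using lim by (simp add: limiting_def)
  then have "(\<lambda>n. \<Sum>a\<in>UNIV. p' a * mat_pow P n a c) \<longlonglongrightarrow> (\<Sum>a\<in>UNIV. p' a * p c)"
    by (intro tendsto_sum tendsto_mult_left)
  moreover have "(\<Sum>a\<in>UNIV. p' a * p c) = p c"
    using st by (simp add: stationary_def sum_distrib_right[symmetric])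
  ultimately show "p' c = p c"
    by (simp add: stationary_mat_pow[OF st] LIMSEQ_const_iff)
qed

lemma dtmc_aperiodic_if_positive_diagonal:
  assumes "\<And>a. 0 < P a a" shows "dtmc_aperiodic P"
  unfolding dtmc_aperiodic_def
proof
  fix a
  have "1 \<in> {n. 0 < n \<and> 0 < mat_pow P n a a}" using assms by (simp add: sum_indicator_mult)
  then have "Gcd {n. 0 < n \<and> 0 < mat_pow P n a a} dvd 1"
    by (rule Gcd_dvd)
  then show "Gcd {n. 0 < n \<and> 0 < mat_pow P n a a} = 1"
    by simp
qed

lemma stat_dist_if_irreducible_positive_diagonal:
  assumes P: "stochastic P" and diag: "\<And>a. 0 < P a a" and irr: "dtmc_irreducible P"
  shows "\<exists>!p. stationary P p" "stationary P (stat_dist P)" "limiting P (stat_dist P)"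
proof -
  obtain N d where N: "0 < N" and d: "0 < d" and minor: "\<And>a b. d \<le> mat_pow P N a b"
    using uniform_minorisation[OF P diag irr] by blast
  obtain p where lim: "limiting P p"
    using limiting_if_minorised[OF P minor d N] ..
  have st: "stationary P p" and uniq: "\<And>p'. stationary P p' \<Longrightarrow> p' = p"
    using stationary_if_limiting[OF P lim] stationary_unique_if_limiting[OF lim] by blast+
  then have stat_dist: "stat_dist P = p"
    unfolding stat_dist_def by (rule the_equality)
  show "\<exists>!p. stationary P p"
    using st uniq by blast
  show "stationary P (stat_dist P)" "limiting P (stat_dist P)"
    unfolding stat_dist by (fact st lim)+
qed

section \<open>Ergodicity of the discretised chain\<close>

lemma flip_apply: "flip m i j = (if j = i then \<not> m i else m j)"
  by (simp add: flip_def)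

lemma flip_neq: "flip m i \<noteq> m" "m \<noteq> flip m i"
  by (metis flip_apply)+

lemma flip_eq_flip_iff: "flip m i = flip m j \<longleftrightarrow> i = j"
  by (metis flip_apply)

lemma flip_eq_iff: "m' = flip m i \<longleftrightarrow> m' i = (\<not> m i) \<and> (\<forall>j. j \<noteq> i \<longrightarrow> m' j = m j)"
  by (auto simp: fun_eq_iff flip_apply)

lemma P_eps_diag: "P_eps q \<epsilon> m m = (\<Prod>i\<in>UNIV. 1 - \<epsilon> * q i m)"
  by (simp add: P_eps_def)

lemma P_eps_flip: "P_eps q \<epsilon> m (flip m i) = \<epsilon> * q i m * (\<Prod>j\<in>- {i}. 1 - \<epsilon> * q j m)"
proof -
  have "{j. m j \<noteq> flip m i j} = {i}" "{j. m j = flip m i j} = - {i}"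
    by (auto simp: flip_apply)
  then show ?thesis by (simp add: P_eps_def)
qed

lemma P_eps_row_sum:
  fixes q :: "'k::finite \<Rightarrow> ('k \<Rightarrow> bool) \<Rightarrow> real"
  shows "(\<Sum>m'\<in>UNIV. P_eps q \<epsilon> m m') = 1"
proof -
  define f where "f i b = (if m i \<noteq> b then \<epsilon> * q i m else 1 - \<epsilon> * q i m)" for i b
  have "P_eps q \<epsilon> m m' = (\<Prod>i\<in>UNIV. f i (m' i))" for m'
  proof -
    have "- {i. m i \<noteq> m' i} = {i. m i = m' i}" by auto
    then show ?thesis by (simp add: P_eps_def f_def prod.If_cases)
  qed
  then have "(\<Sum>m'\<in>UNIV. P_eps q \<epsilon> m m') = (\<Sum>g\<in>PiE UNIV (\<lambda>_. UNIV). \<Prod>i\<in>UNIV. f i (g i))"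
    by simp
  also have "\<dots> = (\<Prod>i\<in>UNIV. \<Sum>b\<in>UNIV. f i b)"
    by (rule prod_sum_PiE[symmetric]) auto
  also have "\<dots> = 1"
    by (rule prod.neutral) (auto simp: f_def UNIV_bool)
  finally show ?thesis .
qed

lemma P_eps_nonneg:
  assumes "\<And>i. 0 \<le> \<epsilon> * q i m \<and> \<epsilon> * q i m \<le> 1"
  shows "0 \<le> P_eps q \<epsilon> m m'"
  unfolding P_eps_def by (rule mult_nonneg_nonneg; rule prod_nonneg) (use assms in auto)

lemma stochastic_P_eps:
  assumes "\<And>i m. 0 \<le> \<epsilon> * q i m \<and> \<epsilon> * q i m \<le> 1"
  shows "stochastic (P_eps q \<epsilon>)"
  unfolding stochastic_def using assms by (simp add: P_eps_nonneg P_eps_row_sum)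

lemma P_eps_diag_pos:
  assumes "\<And>i. \<epsilon> * q i m < 1" shows "0 < P_eps q \<epsilon> m m"
  unfolding P_eps_diag using assms by (intro prod_pos) (simp add: less_imp_le)

lemma bd_rate_diag: "bd_rate q m m = - total_rate q m"
  by (simp add: bd_rate_def total_rate_def)

lemma bd_rate_flip: "bd_rate q m (flip m i) = q i m"
proof -
  have "{j. flip m i = flip m j} = {i}" by (auto simp: flip_eq_flip_iff)
  then show ?thesis using flip_neq[of m i] by (simp add: bd_rate_def)
qed

lemma bd_rate_nonadjacent: "m' \<noteq> m \<Longrightarrow> (\<And>i. m' \<noteq> flip m i) \<Longrightarrow> bd_rate q m m' = 0"
  by (simp add: bd_rate_def)

lemma bd_rate_nonneg:
  assumes "\<And>i m. 0 \<le> q i m" and "m \<noteq> m'" shows "0 \<le> bd_rate q m m'"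
  using assms unfolding bd_rate_def by (auto intro: sum_nonneg)

lemma bd_rate_row_sum:
  fixes q :: "'k::finite \<Rightarrow> ('k \<Rightarrow> bool) \<Rightarrow> real"
  shows "(\<Sum>m'\<in>UNIV. bd_rate q m m') = 0"
proof -
  have "bd_rate q m m' = (if m' = m then - total_rate q m else 0) + (\<Sum>i\<in>UNIV. if m' = flip m i then q i m else 0)" for m'
    by (cases "m' = m") (auto simp: bd_rate_def total_rate_def flip_neq sum.inter_filter[symmetric])
  moreover have "(\<Sum>m'\<in>UNIV. \<Sum>i\<in>UNIV. if m' = flip m i then q i m else 0) = total_rate q m"
    by (subst sum.swap) (simp add: total_rate_def)
  ultimately show ?thesis by (simp add: sum.distrib)
qed

lemma bd_rate_pos_imp_flip:
  assumes "a \<noteq> b" "0 < bd_rate q a b"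
  obtains i where "b = flip a i" "0 < q i a"
proof -
  have "\<not> (\<forall>i\<in>{i. b = flip a i}. q i a \<le> 0)"
    using assms sum_nonpos[of "{i. b = flip a i}" "\<lambda>i. q i a"] by (auto simp: bd_rate_def)
  then show ?thesis using that by force
qed

lemma total_rate_pos:
  fixes q :: "'k::finite \<Rightarrow> ('k \<Rightarrow> bool) \<Rightarrow> real"
  assumes q_nonneg: "\<And>i m. 0 \<le> q i m" and irred: "ctmc_irreducible (bd_rate q)"
  shows "0 < total_rate q m"
proof -
  have "(m, flip m undefined) \<in> {(a, b). a \<noteq> b \<and> 0 < bd_rate q a b}\<^sup>*"
    using irred unfolding ctmc_irreducible_def by blast
  then obtain b where "m \<noteq> b" "0 < bd_rate q m b"
    using flip_neq[of m undefined] by (cases rule: converse_rtranclE) auto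
  then obtain i where "0 < q i m"
    by (rule bd_rate_pos_imp_flip)
  then show ?thesis
    unfolding total_rate_def using q_nonneg by (intro sum_pos2[of UNIV i]) auto
qed

lemma dtmc_irreducible_P_eps:
  fixes q :: "'k::finite \<Rightarrow> ('k \<Rightarrow> bool) \<Rightarrow> real"
  assumes q_nonneg: "\<And>i m. 0 \<le> q i m" and irred: "ctmc_irreducible (bd_rate q)"
    and \<epsilon>: "0 < \<epsilon>" and small: "\<And>i m. \<epsilon> * q i m < 1"
  shows "dtmc_irreducible (P_eps q \<epsilon>)"
  unfolding dtmc_irreducible_def
proof (intro allI)
  fix a c
  have P: "stochastic (P_eps q \<epsilon>)"
    using q_nonneg \<epsilon> small by (intro stochastic_P_eps) (simp add: less_imp_le)
  have "(a, c) \<in> {(x, y). x \<noteq> y \<and> 0 < bd_rate q x y}\<^sup>*"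
    using irred unfolding ctmc_irreducible_def by blast
  then show "\<exists>n. 0 < mat_pow (P_eps q \<epsilon>) n a c"
  proof (induction rule: rtrancl_induct)
    case base
    show ?case by (intro exI[of _ 0]) simp
  next
    case (step b c)
    then obtain n where n: "0 < mat_pow (P_eps q \<epsilon>) n a b" by blast
    from step.hyps(2) obtain i where i: "c = flip b i" "0 < q i b"
      by (auto elim: bd_rate_pos_imp_flip)
    have "0 < P_eps q \<epsilon> b c"
      unfolding i(1) P_eps_flip using \<epsilon> i(2) small by (intro mult_pos_pos prod_pos) (auto simp: less_imp_le)
    then have "0 < mat_pow (P_eps q \<epsilon>) n a b * P_eps q \<epsilon> b c" using n by simp
    also have "\<dots> \<le> mat_pow (P_eps q \<epsilon>) (Suc n) a c"
      by (rule mat_pow_Suc_ge[OF P])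
    finally show ?case ..
  qed
qed

lemma P_eps_ergodic:
  fixes q :: "'k::finite \<Rightarrow> ('k \<Rightarrow> bool) \<Rightarrow> real"
  assumes q_nonneg: "\<And>i m. 0 \<le> q i m" and irred: "ctmc_irreducible (bd_rate q)"
    and \<epsilon>: "0 < \<epsilon>" and small: "\<And>i m. \<epsilon> * q i m < 1"
  shows "dtmc_irreducible (P_eps q \<epsilon>)" "dtmc_aperiodic (P_eps q \<epsilon>)"
    "\<exists>!p. stationary (P_eps q \<epsilon>) p" "stationary (P_eps q \<epsilon>) (stat_dist (P_eps q \<epsilon>))"
    "limiting (P_eps q \<epsilon>) (stat_dist (P_eps q \<epsilon>))"
proof -
  have P: "stochastic (P_eps q \<epsilon>)"
    using q_nonneg \<epsilon> small by (intro stochastic_P_eps) (simp add: less_imp_le)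
  have diag: "0 < P_eps q \<epsilon> m m" for m
    using small by (rule P_eps_diag_pos)
  show irr: "dtmc_irreducible (P_eps q \<epsilon>)"
    by (rule dtmc_irreducible_P_eps[OF q_nonneg irred \<epsilon> small])
  show "dtmc_aperiodic (P_eps q \<epsilon>)"
    using diag by (rule dtmc_aperiodic_if_positive_diagonal)
  show "\<exists>!p. stationary (P_eps q \<epsilon>) p" "stationary (P_eps q \<epsilon>) (stat_dist (P_eps q \<epsilon>))"
    "limiting (P_eps q \<epsilon>) (stat_dist (P_eps q \<epsilon>))"
    using stat_dist_if_irreducible_positive_diagonal[OF P diag irr] by blast+
qed

section \<open>First-order expansion of the discretised chain\<close>

lemma prod_one_minus_bounds:
  fixes x :: "'a \<Rightarrow> real"
  assumes "finite A" "\<And>i. i \<in> A \<Longrightarrow> 0 \<le> x i \<and> x i \<le> 1"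
  shows "1 - sum x A \<le> (\<Prod>i\<in>A. 1 - x i) \<and> (\<Prod>i\<in>A. 1 - x i) \<le> 1 - sum x A + (sum x A)\<^sup>2"
  using assms
proof (induction A rule: finite_induct)
  case empty
  show ?case by simp
next
  case (insert a A)
  define p where "p = (\<Prod>i\<in>A. 1 - x i)"
  define s where "s = sum x A"
  have IH: "1 - s \<le> p" "p \<le> 1 - s + s\<^sup>2" using insert by (auto simp: p_def s_def)
  have xa: "0 \<le> x a" "x a \<le> 1" using insert by auto
  have s: "0 \<le> s" using insert by (auto simp: s_def intro: sum_nonneg)
  have "1 - (x a + s) \<le> (1 - x a) * (1 - s)"
    using xa s by (simp add: algebra_simps)
  also have "\<dots> \<le> (1 - x a) * p"
    using IH(1) xa by (intro mult_left_mono) auto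
  finally have lower: "1 - (x a + s) \<le> (1 - x a) * p" .
  have "x a * (1 - p) \<le> x a * s"
    using IH(1) xa by (intro mult_left_mono) auto
  then have "(1 - x a) * p \<le> p - x a + x a * s"
    by (simp add: algebra_simps)
  also have "\<dots> \<le> 1 - s + s\<^sup>2 - x a + x a * s"
    using IH(2) by simp
  also have "\<dots> \<le> 1 - (x a + s) + (x a + s)\<^sup>2"
    using mult_nonneg_nonneg[of "x a" "x a + s"] xa s by (simp add: power2_eq_square algebra_simps)
  finally have upper: "(1 - x a) * p \<le> 1 - (x a + s) + (x a + s)\<^sup>2" .
  note lower upper
  moreover have "(\<Prod>i\<in>insert a A. 1 - x i) = (1 - x a) * p" "sum x (insert a A) = x a + s"
    using insert by (auto simp: p_def s_def)
  ultimately show ?case by simp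
qed

lemma P_eps_nonadjacent_le:
  fixes q :: "'k::finite \<Rightarrow> ('k \<Rightarrow> bool) \<Rightarrow> real"
  assumes small: "\<And>i. 0 \<le> \<epsilon> * q i m \<and> \<epsilon> * q i m \<le> 1"
    and ne: "m' \<noteq> m" and nonadj: "\<And>i. m' \<noteq> flip m i"
  shows "P_eps q \<epsilon> m m' \<le> (\<epsilon> * total_rate q m)\<^sup>2"
proof -
  define x where "x i = \<epsilon> * q i m" for i
  have x: "0 \<le> x i" "x i \<le> 1" for i using small by (auto simp: x_def)
  define D where "D = {j. m j \<noteq> m' j}"
  obtain a where a: "a \<in> D" using ne by (auto simp: D_def fun_eq_iff)
  obtain b where b: "b \<in> D - {a}"
  proof -
    have "m' \<noteq> flip m a" by (rule nonadj)
    then have "\<exists>b. b \<noteq> a \<and> m b \<noteq> m' b"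
      using a by (auto simp: D_def flip_eq_iff)
    then show ?thesis using that by (auto simp: D_def)
  qed
  have "P_eps q \<epsilon> m m' = (\<Prod>j\<in>D. x j) * (\<Prod>j\<in>{j. m j = m' j}. 1 - x j)"
    by (simp add: P_eps_def D_def x_def)
  also have "\<dots> \<le> (\<Prod>j\<in>D. x j)"
    using x by (intro mult_left_le prod_le_1 prod_nonneg) auto
  also have "\<dots> = x a * (x b * (\<Prod>j\<in>D - {a} - {b}. x j))"
    using prod.remove[OF _ a, of x] prod.remove[OF _ b, of x] by simp
  also have "\<dots> \<le> x a * x b"
    using x by (intro mult_left_mono mult_right_le_one_le prod_le_1 prod_nonneg) auto
  also have "\<dots> \<le> (x a + x b)\<^sup>2"
    using mult_nonneg_nonneg[OF x(1) x(1), of a a] mult_nonneg_nonneg[OF x(1) x(1), of a b]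
      mult_nonneg_nonneg[OF x(1) x(1), of b b]
    by (simp add: power2_eq_square algebra_simps)
  also have "(x a + x b)\<^sup>2 = (sum x {a, b})\<^sup>2"
    using b by (cases "a = b") auto
  also have "\<dots> \<le> (sum x UNIV)\<^sup>2"
    using x by (intro power_mono sum_mono2 sum_nonneg) auto
  finally show ?thesis
    by (simp add: x_def total_rate_def sum_distrib_left)
qed

lemma P_eps_expansion:
  fixes q :: "'k::finite \<Rightarrow> ('k \<Rightarrow> bool) \<Rightarrow> real"
  assumes small: "\<And>i. 0 \<le> \<epsilon> * q i m \<and> \<epsilon> * q i m \<le> 1"
  shows "\<bar>P_eps q \<epsilon> m m' - (if m = m' then 1 else 0) - \<epsilon> * bd_rate q m m'\<bar> \<le> (\<epsilon> * total_rate q m)\<^sup>2"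
proof -
  define x where "x i = \<epsilon> * q i m" for i
  have x: "0 \<le> x i \<and> x i \<le> 1" for i using small by (simp add: x_def)
  have sum_x: "sum x UNIV = \<epsilon> * total_rate q m"
    by (simp add: x_def total_rate_def sum_distrib_left)
  have sum_x_nonneg: "0 \<le> sum x A" for A using x by (simp add: sum_nonneg)
  consider "m' = m" | i where "m' = flip m i" | "m' \<noteq> m" "\<And>i. m' \<noteq> flip m i"
    by blast
  then show ?thesis
  proof cases
    case 1
    have "P_eps q \<epsilon> m m' - (if m = m' then 1 else 0) - \<epsilon> * bd_rate q m m' = (\<Prod>i\<in>UNIV. 1 - x i) - (1 - sum x UNIV)"
      using 1 by (simp add: P_eps_diag bd_rate_diag x_def total_rate_def sum_distrib_left)
    then show ?thesis
      using prod_one_minus_bounds[of UNIV x] x sum_x by auto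
  next
    case (2 i)
    have lower: "1 - sum x (- {i}) \<le> (\<Prod>j\<in>- {i}. 1 - x j)"
      using prod_one_minus_bounds[of "- {i}" x] x by auto
    have le1: "(\<Prod>j\<in>- {i}. 1 - x j) \<le> 1" using x by (intro prod_le_1) auto
    have "sum x (- {i}) \<le> sum x UNIV" "x i \<le> sum x UNIV"
      using x by (auto intro: sum_mono2 member_le_sum)
    then have "x i * (1 - (\<Prod>j\<in>- {i}. 1 - x j)) \<le> sum x UNIV * sum x UNIV"
      using x lower le1 by (intro mult_mono) (auto simp: sum_x_nonneg)
    moreover have "0 \<le> x i * (1 - (\<Prod>j\<in>- {i}. 1 - x j))" using x le1 by simp
    moreover have "P_eps q \<epsilon> m m' - (if m = m' then 1 else 0) - \<epsilon> * bd_rate q m m'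
        = - (x i * (1 - (\<Prod>j\<in>- {i}. 1 - x j)))"
      using 2 by (simp add: P_eps_flip bd_rate_flip flip_neq x_def algebra_simps)
    ultimately show ?thesis by (simp add: sum_x power2_eq_square)
  next
    case 3
    then show ?thesis
      using P_eps_nonadjacent_le[of \<epsilon> q m m'] P_eps_nonneg[of \<epsilon> q m m'] bd_rate_nonadjacent[OF 3] small
      by auto
  qed
qed

lemma eventually_rates_small:
  fixes q :: "'k::finite \<Rightarrow> ('k \<Rightarrow> bool) \<Rightarrow> real"
  shows "\<forall>\<^sub>F \<epsilon> in at_right 0. \<forall>i m. \<epsilon> * q i m < 1"
proof (intro eventually_all_finite)
  fix i m
  have "((\<lambda>\<epsilon>. \<epsilon> * q i m) \<longlongrightarrow> 0 * q i m) (at_right 0)"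
    by (intro tendsto_intros)
  from order_tendstoD(2)[OF this, of 1]
  show "\<forall>\<^sub>F \<epsilon> in at_right 0. \<epsilon> * q i m < 1"
    by simp
qed

lemma eventually_rates_in_unit_interval:
  fixes q :: "'k::finite \<Rightarrow> ('k \<Rightarrow> bool) \<Rightarrow> real"
  assumes q_nonneg: "\<And>i m. 0 \<le> q i m"
  shows "\<forall>\<^sub>F \<epsilon> in at_right 0. 0 < \<epsilon> \<and> (\<forall>i m. 0 \<le> \<epsilon> * q i m \<and> \<epsilon> * q i m < 1)"
  using eventually_rates_small[of q] eventually_at_right_less[of 0]
  by eventually_elim (simp add: q_nonneg)

lemma P_eps_difference_quotient_error:
  fixes q :: "'k::finite \<Rightarrow> ('k \<Rightarrow> bool) \<Rightarrow> real"
  assumes small: "\<And>i. 0 \<le> \<epsilon> * q i m \<and> \<epsilon> * q i m \<le> 1" and \<epsilon>: "0 < \<epsilon>"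
  shows "\<bar>(P_eps q \<epsilon> m m' - (if m = m' then 1 else 0)) / \<epsilon> - bd_rate q m m'\<bar> \<le> \<epsilon> * (total_rate q m)\<^sup>2"
proof -
  have "\<bar>P_eps q \<epsilon> m m' - (if m = m' then 1 else 0) - \<epsilon> * bd_rate q m m'\<bar> \<le> (\<epsilon> * total_rate q m)\<^sup>2"
    using small by (rule P_eps_expansion)
  also have "\<dots> = \<epsilon> * (\<epsilon> * (total_rate q m)\<^sup>2)"
    by (simp add: power2_eq_square)
  finally show ?thesis
    using \<epsilon> by (simp add: abs_le_iff field_simps)
qed

lemma P_eps_rate_tendsto:
  fixes q :: "'k::finite \<Rightarrow> ('k \<Rightarrow> bool) \<Rightarrow> real"
  assumes q_nonneg: "\<And>i m. 0 \<le> q i m"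
  shows "((\<lambda>\<epsilon>. (P_eps q \<epsilon> m m' - (if m = m' then 1 else 0)) / \<epsilon>) \<longlongrightarrow> bd_rate q m m') (at_right 0)"
proof -
  have "\<forall>\<^sub>F \<epsilon> in at_right 0.
      norm ((P_eps q \<epsilon> m m' - (if m = m' then 1 else 0)) / \<epsilon> - bd_rate q m m') \<le> \<epsilon> * (total_rate q m)\<^sup>2"
    using eventually_rates_in_unit_interval[OF q_nonneg]
  proof (rule eventually_mono)
    fix \<epsilon> :: real
    assume "0 < \<epsilon> \<and> (\<forall>i m. 0 \<le> \<epsilon> * q i m \<and> \<epsilon> * q i m < 1)"
    then have "0 < \<epsilon>" "\<And>i. 0 \<le> \<epsilon> * q i m \<and> \<epsilon> * q i m \<le> 1"
      by (auto simp: less_imp_le)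
    then show "norm ((P_eps q \<epsilon> m m' - (if m = m' then 1 else 0)) / \<epsilon> - bd_rate q m m') \<le> \<epsilon> * (total_rate q m)\<^sup>2"
      using P_eps_difference_quotient_error[of \<epsilon> q m m'] by simp
  qed
  moreover have "((\<lambda>\<epsilon>. \<epsilon> * (total_rate q m)\<^sup>2) \<longlongrightarrow> 0) (at_right 0)"
    by (auto intro!: tendsto_eq_intros)
  ultimately have "((\<lambda>\<epsilon>. (P_eps q \<epsilon> m m' - (if m = m' then 1 else 0)) / \<epsilon> - bd_rate q m m') \<longlongrightarrow> 0) (at_right 0)"
    by (rule Lim_null_comparison)
  then show ?thesis
    by (simp add: LIM_zero_iff)
qed

lemma one_minus_P_eps_diag_div_tendsto:
  fixes q :: "'k::finite \<Rightarrow> ('k \<Rightarrow> bool) \<Rightarrow> real"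
  assumes q_nonneg: "\<And>i m. 0 \<le> q i m"
  shows "((\<lambda>\<epsilon>. (1 - P_eps q \<epsilon> m m) / \<epsilon>) \<longlongrightarrow> total_rate q m) (at_right 0)"
proof -
  have "((\<lambda>\<epsilon>. - ((P_eps q \<epsilon> m m - 1) / \<epsilon>)) \<longlongrightarrow> - bd_rate q m m) (at_right 0)"
    using P_eps_rate_tendsto[OF q_nonneg, where m = m and m' = m] by (intro tendsto_minus) simp
  moreover have "- ((P_eps q \<epsilon> m m - 1) / \<epsilon>) = (1 - P_eps q \<epsilon> m m) / \<epsilon>" for \<epsilon>
    by (simp add: minus_divide_left)
  ultimately show ?thesis
    by (simp add: bd_rate_diag)
qed

lemma jump_prob_tendsto:
  fixes q :: "'k::finite \<Rightarrow> ('k \<Rightarrow> bool) \<Rightarrow> real"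
  assumes q_nonneg: "\<And>i m. 0 \<le> q i m" and irred: "ctmc_irreducible (bd_rate q)" and "m \<noteq> m'"
  shows "((\<lambda>\<epsilon>. jump_prob q \<epsilon> m m') \<longlongrightarrow> bd_rate q m m' / total_rate q m) (at_right 0)"
proof -
  have "((\<lambda>\<epsilon>. (P_eps q \<epsilon> m m' / \<epsilon>) / ((1 - P_eps q \<epsilon> m m) / \<epsilon>)) \<longlongrightarrow> bd_rate q m m' / total_rate q m)
      (at_right 0)"
    using P_eps_rate_tendsto[OF q_nonneg, where m = m and m' = m'] one_minus_P_eps_diag_div_tendsto[OF q_nonneg]
      total_rate_pos[OF q_nonneg irred, of m] \<open>m \<noteq> m'\<close>
    by (intro tendsto_divide) auto
  moreover have "\<forall>\<^sub>F \<epsilon> in at_right 0. (P_eps q \<epsilon> m m' / \<epsilon>) / ((1 - P_eps q \<epsilon> m m) / \<epsilon>) = jump_prob q \<epsilon> m m'"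
    using eventually_at_right_less[of 0]
    by eventually_elim (auto simp: jump_prob_def)
  ultimately show ?thesis
    by (rule Lim_transform_eventually)
qed

section \<open>The stationary distribution as \<epsilon> tends to 0\<close>

lemma harmonic_constant:
  fixes Q :: "'s::finite \<Rightarrow> 's \<Rightarrow> real"
  assumes offdiag: "\<And>a b. a \<noteq> b \<Longrightarrow> 0 \<le> Q a b" and rows: "\<And>a. (\<Sum>b\<in>UNIV. Q a b) = 0"
    and irr: "ctmc_irreducible Q" and harmonic: "\<And>a. (\<Sum>b\<in>UNIV. Q a b * h b) = 0"
  shows "h a = h b"
proof -
  have "Max (range h) \<in> range h" by (rule Max_in) auto
  then obtain M where M: "h M = Max (range h)" by (metis imageE)
  have max: "h x \<le> h M" for x
    unfolding M by (rule Max_ge) auto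
  have propagate: "h y = h M" if x: "h x = h M" and xy: "x \<noteq> y" "0 < Q x y" for x y
  proof -
    have "(\<Sum>z\<in>UNIV. Q x z * (h M - h z)) = 0"
      using harmonic[of x] rows[of x] by (simp add: right_diff_distrib sum_subtractf sum_distrib_right[symmetric])
    moreover have "0 \<le> Q x z * (h M - h z)" for z
      using offdiag[of x z] max[of z] x by (cases "x = z") auto
    ultimately have "Q x y * (h M - h y) = 0"
      by (simp add: sum_nonneg_eq_0_iff)
    then show ?thesis using xy by simp
  qed
  have all_max: "h x = h M" for x
  proof -
    have "(M, x) \<in> {(a, b). a \<noteq> b \<and> 0 < Q a b}\<^sup>*"
      using irr unfolding ctmc_irreducible_def by blast
    then show ?thesis
    proof (induction rule: rtrancl_induct)
      case base
      show ?case ..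
    next
      case (step y z)
      then show ?case using propagate[of y z] by auto
    qed
  qed
  show ?thesis using all_max[of a] all_max[of b] by simp
qed

text \<open>Reversibility turns a left null vector d of Q into the right null vector d / \<pi>, which is
  harmonic and therefore constant.\<close>
lemma reversible_left_null_eq_0:
  fixes Q :: "'s::finite \<Rightarrow> 's \<Rightarrow> real"
  assumes offdiag: "\<And>a b. a \<noteq> b \<Longrightarrow> 0 \<le> Q a b" and rows: "\<And>a. (\<Sum>b\<in>UNIV. Q a b) = 0"
    and irr: "ctmc_irreducible Q" and rev: "reversible Q \<pi>" and pi_pos: "\<And>a. 0 < \<pi> a"
    and null: "\<And>b. (\<Sum>a\<in>UNIV. d a * Q a b) = 0" and sum_zero: "sum d UNIV = 0"
  shows "d a = 0"
proof -
  define h where "h a = d a / \<pi> a" for a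
  have d: "d a = h a * \<pi> a" for a
    using pi_pos[of a] by (simp add: h_def)
  have harmonic: "(\<Sum>b\<in>UNIV. Q a b * h b) = 0" for a
  proof -
    have detailed_balance: "\<pi> a * Q a b = \<pi> b * Q b a" for b
      using rev unfolding reversible_def by blast
    have "\<pi> a * (\<Sum>b\<in>UNIV. Q a b * h b) = (\<Sum>b\<in>UNIV. h b * (\<pi> a * Q a b))"
      by (simp add: sum_distrib_left mult_ac)
    also have "\<dots> = (\<Sum>b\<in>UNIV. h b * (\<pi> b * Q b a))"
      by (simp only: detailed_balance)
    also have "\<dots> = 0"
      using null[of a] by (simp add: d mult_ac)
    finally show ?thesis using pi_pos[of a] by simp
  qed
  have "d b = h a * \<pi> b" for b
    using d[of b] harmonic_constant[OF offdiag rows irr harmonic, of b a] by simp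
  then have "h a * sum \<pi> UNIV = 0"
    using sum_zero by (simp add: sum_distrib_left)
  moreover have "0 < sum \<pi> UNIV"
    using pi_pos by (simp add: sum_pos)
  ultimately show ?thesis by (simp add: d)
qed

lemma reversible_stationary:
  fixes Q :: "'s::finite \<Rightarrow> 's \<Rightarrow> real"
  assumes rows: "\<And>a. (\<Sum>b\<in>UNIV. Q a b) = 0" and rev: "reversible Q \<pi>"
  shows "(\<Sum>a\<in>UNIV. \<pi> a * Q a b) = 0"
proof -
  have "(\<Sum>a\<in>UNIV. \<pi> a * Q a b) = \<pi> b * (\<Sum>a\<in>UNIV. Q b a)"
    using rev by (simp add: reversible_def sum_distrib_left)
  then show ?thesis by (simp add: rows)
qed

lemma zero_sum_left_action_bounded_below:
  fixes Q :: "'s::finite \<Rightarrow> 's \<Rightarrow> real"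
  assumes inj: "\<And>d. sum d UNIV = 0 \<Longrightarrow> (\<And>b. (\<Sum>a\<in>UNIV. d a * Q a b) = 0) \<Longrightarrow> d = (\<lambda>_. 0)"
  obtains C where "0 \<le> C"
    "\<And>d. sum d UNIV = 0 \<Longrightarrow> (\<Sum>a\<in>UNIV. \<bar>d a\<bar>) \<le> C * (\<Sum>b\<in>UNIV. \<bar>\<Sum>a\<in>UNIV. d a * Q a b\<bar>)"
proof -
  define L :: "real^'s \<Rightarrow> real^'s" where "L v = (\<chi> b. \<Sum>a\<in>UNIV. v $ a * Q a b)" for v
  define S where "S = {v :: real^'s. (\<chi> _. 1) \<bullet> v = 0}"
  have S: "v \<in> S \<longleftrightarrow> (\<Sum>a\<in>UNIV. v $ a) = 0" for v
    by (simp add: S_def inner_vec_def)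
  have "linear L"
    by (rule linearI) (simp_all add: L_def vec_eq_iff algebra_simps sum.distrib sum_distrib_left)
  moreover have "\<forall>v\<in>S. L v = 0 \<longrightarrow> v = 0"
  proof (intro ballI impI)
    fix v assume "v \<in> S" "L v = 0"
    then have "(\<lambda>a. v $ a) = (\<lambda>_. 0)"
      by (intro inj) (auto simp: S L_def vec_eq_iff)
    then show "v = 0" by (simp add: vec_eq_iff fun_eq_iff)
  qed
  ultimately obtain c where c: "0 < c" "\<And>v. v \<in> S \<Longrightarrow> c * norm v \<le> norm (L v)"
    using injective_imp_isometric[of S L] by (auto simp: S_def closed_hyperplane subspace_hyperplane
        linear_conv_bounded_linear)
  show ?thesis
  proof (rule that[of "real CARD('s) / c"])
    show "0 \<le> real CARD('s) / c" using c(1) by simp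
  next
    fix d :: "'s \<Rightarrow> real" assume "sum d UNIV = 0"
    then have v: "vec_lambda d \<in> S" by (simp add: S)
    have "(\<Sum>a\<in>UNIV. \<bar>d a\<bar>) \<le> (\<Sum>a\<in>(UNIV :: 's set). norm (vec_lambda d))"
      using component_le_norm_cart[of "vec_lambda d"] by (intro sum_mono) simp
    also have "\<dots> = real CARD('s) / c * (c * norm (vec_lambda d))"
      using c(1) by simp
    also have "\<dots> \<le> real CARD('s) / c * norm (L (vec_lambda d))"
      using c(1) c(2)[OF v] by (intro mult_left_mono) auto
    also have "\<dots> \<le> real CARD('s) / c * (\<Sum>b\<in>UNIV. \<bar>\<Sum>a\<in>UNIV. d a * Q a b\<bar>)"
      using c(1) norm_le_l1_cart[of "L (vec_lambda d)"] by (intro mult_left_mono) (auto simp: L_def)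
    finally show "(\<Sum>a\<in>UNIV. \<bar>d a\<bar>) \<le> real CARD('s) / c * (\<Sum>b\<in>UNIV. \<bar>\<Sum>a\<in>UNIV. d a * Q a b\<bar>)" .
  qed
qed

lemma vnorm_sum_le:
  fixes N :: "('s \<Rightarrow> real) \<Rightarrow> real" and f :: "'a \<Rightarrow> 's \<Rightarrow> real"
  assumes N: "is_vnorm N" and "finite A"
  shows "N (\<lambda>b. \<Sum>a\<in>A. f a b) \<le> (\<Sum>a\<in>A. N (f a))"
  using \<open>finite A\<close>
proof (induction A rule: finite_induct)
  case empty
  have "N (\<lambda>_. 0) = 0" using N by (simp add: is_vnorm_def)
  then show ?case by simp
next
  case (insert a A)
  have "N (\<lambda>b. \<Sum>a'\<in>insert a A. f a' b) = N (\<lambda>b. f a b + (\<Sum>a'\<in>A. f a' b))"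
    using insert by simp
  also have "\<dots> \<le> N (f a) + N (\<lambda>b. \<Sum>a'\<in>A. f a' b)"
    using N unfolding is_vnorm_def by simp
  also have "\<dots> \<le> N (f a) + (\<Sum>a'\<in>A. N (f a'))"
    using insert.IH by simp
  finally show ?case using insert by simp
qed

lemma vnorm_le_sum_abs:
  fixes N :: "('s::finite \<Rightarrow> real) \<Rightarrow> real"
  assumes N: "is_vnorm N"
  obtains C where "0 \<le> C" "\<And>x. N x \<le> C * (\<Sum>a\<in>UNIV. \<bar>x a\<bar>)"
proof -
  define e where "e a = (\<lambda>b. if b = a then 1 else 0 :: real)" for a :: 's
  define C where "C = (\<Sum>a\<in>UNIV. N (e a))"
  have N_nonneg: "0 \<le> N x" for x using N by (simp add: is_vnorm_def)
  have "N x \<le> C * (\<Sum>a\<in>UNIV. \<bar>x a\<bar>)" for x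
  proof -
    have "x = (\<lambda>b. \<Sum>a\<in>UNIV. x a * e a b)"
      by (simp add: e_def fun_eq_iff if_distrib cong: if_cong)
    then have "N x \<le> (\<Sum>a\<in>UNIV. N (\<lambda>b. x a * e a b))"
      using vnorm_sum_le[OF N, of UNIV "\<lambda>a b. x a * e a b"] by simp
    also have "\<dots> = (\<Sum>a\<in>UNIV. \<bar>x a\<bar> * N (e a))"
      using N by (simp add: is_vnorm_def)
    also have "\<dots> \<le> (\<Sum>a\<in>UNIV. \<bar>x a\<bar> * C)"
      using N_nonneg by (intro sum_mono mult_left_mono) (auto simp: C_def intro: member_le_sum)
    finally show ?thesis by (simp add: sum_distrib_left mult.commute)
  qed
  moreover have "0 \<le> C" using N_nonneg by (simp add: C_def sum_nonneg)
  ultimately show ?thesis using that by blast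
qed

lemma stationary_P_eps_bd_rate_defect:
  fixes q :: "'k::finite \<Rightarrow> ('k \<Rightarrow> bool) \<Rightarrow> real"
  assumes small: "\<And>i m. 0 \<le> \<epsilon> * q i m \<and> \<epsilon> * q i m \<le> 1" and \<epsilon>: "0 < \<epsilon>"
    and st: "stationary (P_eps q \<epsilon>) p"
  shows "\<bar>\<Sum>a\<in>UNIV. p a * bd_rate q a b\<bar> \<le> \<epsilon> * (\<Sum>a\<in>UNIV. (total_rate q a)\<^sup>2)"
proof -
  define R where "R a = P_eps q \<epsilon> a b - (if a = b then 1 else 0) - \<epsilon> * bd_rate q a b" for a
  have p_nonneg: "0 \<le> p a" for a
    using st by (simp add: stationary_def)
  have p_le_1: "p a \<le> 1" for a
  proof -
    have "p a \<le> sum p UNIV" using p_nonneg by (intro member_le_sum) auto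
    then show ?thesis using st by (simp add: stationary_def)
  qed
  have "(\<Sum>a\<in>UNIV. p a * R a)
      = (\<Sum>a\<in>UNIV. p a * P_eps q \<epsilon> a b) - (\<Sum>a\<in>UNIV. p a * (if a = b then 1 else 0))
        - \<epsilon> * (\<Sum>a\<in>UNIV. p a * bd_rate q a b)"
    by (simp add: R_def right_diff_distrib sum_subtractf sum_distrib_left mult_ac)
  also have "\<dots> = - \<epsilon> * (\<Sum>a\<in>UNIV. p a * bd_rate q a b)"
    using st by (simp add: stationary_def if_distrib cong: if_cong)
  finally have defect: "\<epsilon> * \<bar>\<Sum>a\<in>UNIV. p a * bd_rate q a b\<bar> = \<bar>\<Sum>a\<in>UNIV. p a * R a\<bar>"
    using \<epsilon> by (simp add: abs_mult)
  have R: "\<bar>R a\<bar> \<le> (\<epsilon> * total_rate q a)\<^sup>2" for a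
    unfolding R_def by (rule P_eps_expansion) (rule small)
  have "\<bar>\<Sum>a\<in>UNIV. p a * R a\<bar> \<le> (\<Sum>a\<in>UNIV. p a * \<bar>R a\<bar>)"
    using p_nonneg by (intro order_trans[OF sum_abs]) (simp add: abs_mult)
  also have "\<dots> \<le> (\<Sum>a\<in>UNIV. 1 * (\<epsilon> * total_rate q a)\<^sup>2)"
    using p_nonneg p_le_1 R by (intro sum_mono mult_mono) auto
  also have "\<dots> = \<epsilon> * (\<epsilon> * (\<Sum>a\<in>UNIV. (total_rate q a)\<^sup>2))"
    by (simp add: power_mult_distrib sum_distrib_left power2_eq_square mult_ac)
  finally have "\<epsilon> * \<bar>\<Sum>a\<in>UNIV. p a * bd_rate q a b\<bar> \<le> \<epsilon> * (\<epsilon> * (\<Sum>a\<in>UNIV. (total_rate q a)\<^sup>2))"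
    unfolding defect .
  then show ?thesis
    using \<epsilon> by (simp add: mult_le_cancel_left_pos)
qed

lemma bd_rate_zero_sum_bounded_below:
  fixes q :: "'k::finite \<Rightarrow> ('k \<Rightarrow> bool) \<Rightarrow> real" and \<pi> :: "('k \<Rightarrow> bool) \<Rightarrow> real"
  assumes q_nonneg: "\<And>i m. 0 \<le> q i m" and irred: "ctmc_irreducible (bd_rate q)"
    and pi_pos: "\<And>m. 0 < \<pi> m" and rev: "reversible (bd_rate q) \<pi>"
  obtains C where "0 \<le> C"
    "\<And>d. sum d UNIV = 0 \<Longrightarrow> (\<Sum>a\<in>UNIV. \<bar>d a\<bar>) \<le> C * (\<Sum>b\<in>UNIV. \<bar>\<Sum>a\<in>UNIV. d a * bd_rate q a b\<bar>)"
proof (rule zero_sum_left_action_bounded_below)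
  fix d :: "('k \<Rightarrow> bool) \<Rightarrow> real"
  assume "sum d UNIV = 0" "\<And>b. (\<Sum>a\<in>UNIV. d a * bd_rate q a b) = 0"
  then show "d = (\<lambda>_. 0)"
    using reversible_left_null_eq_0[OF bd_rate_nonneg[OF q_nonneg] bd_rate_row_sum irred rev pi_pos]
    by blast
qed (rule that)

lemma stat_dist_P_eps_sum_abs_deviation:
  fixes q :: "'k::finite \<Rightarrow> ('k \<Rightarrow> bool) \<Rightarrow> real" and \<pi> :: "('k \<Rightarrow> bool) \<Rightarrow> real"
  assumes q_nonneg: "\<And>i m. 0 \<le> q i m" and irred: "ctmc_irreducible (bd_rate q)"
    and pi_pos: "\<And>m. 0 < \<pi> m" and pi_sum: "(\<Sum>m\<in>UNIV. \<pi> m) = 1"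
    and rev: "reversible (bd_rate q) \<pi>"
  obtains K where "\<forall>\<^sub>F \<epsilon> in at_right 0. (\<Sum>a\<in>UNIV. \<bar>stat_dist (P_eps q \<epsilon>) a - \<pi> a\<bar>) \<le> K * \<epsilon>"
proof -
  obtain C where C: "0 \<le> C"
    "\<And>d. sum d UNIV = 0 \<Longrightarrow> (\<Sum>a\<in>UNIV. \<bar>d a\<bar>) \<le> C * (\<Sum>b\<in>UNIV. \<bar>\<Sum>a\<in>UNIV. d a * bd_rate q a b\<bar>)"
    using bd_rate_zero_sum_bounded_below[OF q_nonneg irred pi_pos rev] by blast
  define K where "K = C * (real CARD('k \<Rightarrow> bool) * (\<Sum>a\<in>UNIV. (total_rate q a)\<^sup>2))"
  have "\<forall>\<^sub>F \<epsilon> in at_right 0. (\<Sum>a\<in>UNIV. \<bar>stat_dist (P_eps q \<epsilon>) a - \<pi> a\<bar>) \<le> K * \<epsilon>"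
    using eventually_rates_in_unit_interval[OF q_nonneg]
  proof (rule eventually_mono)
    fix \<epsilon> :: real
    assume "0 < \<epsilon> \<and> (\<forall>i m. 0 \<le> \<epsilon> * q i m \<and> \<epsilon> * q i m < 1)"
    then have \<epsilon>: "0 < \<epsilon>" and small: "\<And>i m. 0 \<le> \<epsilon> * q i m \<and> \<epsilon> * q i m \<le> 1"
      and below_1: "\<And>i m. \<epsilon> * q i m < 1"
      by (auto simp: less_imp_le)
    define p where "p = stat_dist (P_eps q \<epsilon>)"
    have st: "stationary (P_eps q \<epsilon>) p"
      unfolding p_def by (rule P_eps_ergodic(4)[OF q_nonneg irred \<epsilon> below_1])
    define d where "d = (\<lambda>m. p m - \<pi> m)"
    have "sum d UNIV = 0"
      using st pi_sum by (simp add: d_def sum_subtractf stationary_def)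
    have "(\<Sum>b\<in>UNIV. \<bar>\<Sum>a\<in>UNIV. d a * bd_rate q a b\<bar>) = (\<Sum>b\<in>UNIV. \<bar>\<Sum>a\<in>UNIV. p a * bd_rate q a b\<bar>)"
      using reversible_stationary[OF bd_rate_row_sum rev] by (simp add: d_def left_diff_distrib sum_subtractf)
    also have "\<dots> \<le> (\<Sum>b\<in>(UNIV :: ('k \<Rightarrow> bool) set). \<epsilon> * (\<Sum>a\<in>UNIV. (total_rate q a)\<^sup>2))"
      by (intro sum_mono stationary_P_eps_bd_rate_defect[OF small \<epsilon> st])
    finally have defect: "(\<Sum>b\<in>UNIV. \<bar>\<Sum>a\<in>UNIV. d a * bd_rate q a b\<bar>)
        \<le> (\<Sum>b\<in>(UNIV :: ('k \<Rightarrow> bool) set). \<epsilon> * (\<Sum>a\<in>UNIV. (total_rate q a)\<^sup>2))" .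
    have "(\<Sum>a\<in>UNIV. \<bar>d a\<bar>) \<le> C * (\<Sum>b\<in>UNIV. \<bar>\<Sum>a\<in>UNIV. d a * bd_rate q a b\<bar>)"
      by (rule C(2)) fact
    also have "\<dots> \<le> C * (\<Sum>b\<in>(UNIV :: ('k \<Rightarrow> bool) set). \<epsilon> * (\<Sum>a\<in>UNIV. (total_rate q a)\<^sup>2))"
      by (rule mult_left_mono[OF defect C(1)])
    finally show "(\<Sum>a\<in>UNIV. \<bar>stat_dist (P_eps q \<epsilon>) a - \<pi> a\<bar>) \<le> K * \<epsilon>"
      by (simp add: d_def p_def K_def mult_ac)
  qed
  then show ?thesis by (rule that)
qed

lemma stat_dist_P_eps_bigo:
  fixes q :: "'k::finite \<Rightarrow> ('k \<Rightarrow> bool) \<Rightarrow> real" and \<pi> :: "('k \<Rightarrow> bool) \<Rightarrow> real"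
  assumes q_nonneg: "\<And>i m. 0 \<le> q i m" and irred: "ctmc_irreducible (bd_rate q)"
    and pi_pos: "\<And>m. 0 < \<pi> m" and pi_sum: "(\<Sum>m\<in>UNIV. \<pi> m) = 1"
    and rev: "reversible (bd_rate q) \<pi>" and N: "is_vnorm N"
  shows "(\<lambda>\<epsilon>. N (\<lambda>m. stat_dist (P_eps q \<epsilon>) m - \<pi> m)) \<in> O[at_right 0](\<lambda>\<epsilon>. \<epsilon>)"
proof -
  obtain K where K: "\<forall>\<^sub>F \<epsilon> in at_right 0. (\<Sum>a\<in>UNIV. \<bar>stat_dist (P_eps q \<epsilon>) a - \<pi> a\<bar>) \<le> K * \<epsilon>"
    using stat_dist_P_eps_sum_abs_deviation[OF q_nonneg irred pi_pos pi_sum rev] by blast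
  obtain C where C: "0 \<le> C" "\<And>x. N x \<le> C * (\<Sum>a\<in>UNIV. \<bar>x a\<bar>)"
    using vnorm_le_sum_abs[OF N] by blast
  have "\<forall>\<^sub>F \<epsilon> in at_right 0. norm (N (\<lambda>m. stat_dist (P_eps q \<epsilon>) m - \<pi> m)) \<le> C * K * norm \<epsilon>"
    using K eventually_at_right_less[of 0]
  proof eventually_elim
    case (elim \<epsilon>)
    have "N (\<lambda>m. stat_dist (P_eps q \<epsilon>) m - \<pi> m) \<le> C * (K * \<epsilon>)"
      using C(2) mult_left_mono[OF elim(1) C(1)] by (rule order_trans)
    moreover have "0 \<le> N (\<lambda>m. stat_dist (P_eps q \<epsilon>) m - \<pi> m)"
      using N by (simp add: is_vnorm_def)
    ultimately show ?case
      using elim(2) by (simp add: mult.assoc)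
  qed
  then show ?thesis by (rule bigoI)
qed

section \<open>Holding times\<close>

lemma tendsto_one_if_one_minus_div_tendsto:
  fixes \<rho> :: "real \<Rightarrow> real"
  assumes "((\<lambda>\<epsilon>. (1 - \<rho> \<epsilon>) / \<epsilon>) \<longlongrightarrow> l) (at_right 0)"
  shows "(\<rho> \<longlongrightarrow> 1) (at_right 0)"
proof -
  have "((\<lambda>\<epsilon>. 1 - \<epsilon> * ((1 - \<rho> \<epsilon>) / \<epsilon>)) \<longlongrightarrow> 1 - 0 * l) (at_right (0::real))"
    by (intro tendsto_intros assms)
  moreover have "\<forall>\<^sub>F \<epsilon> in at_right 0. 1 - \<epsilon> * ((1 - \<rho> \<epsilon>) / \<epsilon>) = \<rho> \<epsilon>"
    using eventually_at_right_less[of 0] by eventually_elim simp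
  ultimately show ?thesis
    by (simp add: Lim_transform_eventually)
qed

lemma ln_div_tendsto_if_one_minus_div_tendsto:
  fixes \<rho> :: "real \<Rightarrow> real"
  assumes lim: "((\<lambda>\<epsilon>. (1 - \<rho> \<epsilon>) / \<epsilon>) \<longlongrightarrow> l) (at_right 0)"
  shows "((\<lambda>\<epsilon>. ln (\<rho> \<epsilon>) / \<epsilon>) \<longlongrightarrow> - l) (at_right 0)"
proof (rule tendsto_sandwich)
  have "\<forall>\<^sub>F \<epsilon> in at_right 0. 0 < \<rho> \<epsilon>"
    using tendsto_one_if_one_minus_div_tendsto[OF lim] by (rule order_tendstoD) simp
  then have pos: "\<forall>\<^sub>F \<epsilon> in at_right 0. 0 < \<epsilon> \<and> 0 < \<rho> \<epsilon>"
    using eventually_at_right_less[of 0] by eventually_elim simp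
  text \<open>ln x lies between (x - 1) / x and x - 1.\<close>
  show "\<forall>\<^sub>F \<epsilon> in at_right 0. - ((1 - \<rho> \<epsilon>) / \<epsilon>) / \<rho> \<epsilon> \<le> ln (\<rho> \<epsilon>) / \<epsilon>"
    using pos
  proof eventually_elim
    case (elim \<epsilon>)
    then have "- ln (\<rho> \<epsilon>) \<le> 1 / \<rho> \<epsilon> - 1"
      using ln_le_minus_one[of "1 / \<rho> \<epsilon>"] by (simp add: ln_div)
    then have "(\<rho> \<epsilon> - 1) / \<rho> \<epsilon> \<le> ln (\<rho> \<epsilon>)"
      using elim by (simp add: field_simps)
    then have "((\<rho> \<epsilon> - 1) / \<rho> \<epsilon>) / \<epsilon> \<le> ln (\<rho> \<epsilon>) / \<epsilon>"
      by (rule divide_right_mono) (use elim in simp)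
    moreover have "- ((1 - \<rho> \<epsilon>) / \<epsilon>) / \<rho> \<epsilon> = ((\<rho> \<epsilon> - 1) / \<rho> \<epsilon>) / \<epsilon>"
      by (simp add: field_simps minus_divide_left)
    ultimately show ?case by simp
  qed
  show "\<forall>\<^sub>F \<epsilon> in at_right 0. ln (\<rho> \<epsilon>) / \<epsilon> \<le> - ((1 - \<rho> \<epsilon>) / \<epsilon>)"
    using pos
  proof eventually_elim
    case (elim \<epsilon>)
    then show ?case
      using ln_le_minus_one[of "\<rho> \<epsilon>"] by (simp add: field_simps)
  qed
  show "((\<lambda>\<epsilon>. - ((1 - \<rho> \<epsilon>) / \<epsilon>) / \<rho> \<epsilon>) \<longlongrightarrow> - l) (at_right 0)"
    using tendsto_divide[OF tendsto_minus[OF lim] tendsto_one_if_one_minus_div_tendsto[OF lim]] by simp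
  show "((\<lambda>\<epsilon>. - ((1 - \<rho> \<epsilon>) / \<epsilon>)) \<longlongrightarrow> - l) (at_right 0)"
    using lim by (rule tendsto_minus)
qed

lemma tendsto_mult_nat_floor_div:
  fixes x :: real
  assumes "0 \<le> x"
  shows "((\<lambda>\<epsilon>. \<epsilon> * real (nat \<lfloor>x / \<epsilon>\<rfloor>)) \<longlongrightarrow> x) (at_right 0)"
proof (rule tendsto_sandwich)
  have bounds: "x - \<epsilon> \<le> \<epsilon> * real (nat \<lfloor>x / \<epsilon>\<rfloor>) \<and> \<epsilon> * real (nat \<lfloor>x / \<epsilon>\<rfloor>) \<le> x" if "0 < \<epsilon>" for \<epsilon>
  proof -
    have nat_floor: "real (nat \<lfloor>x / \<epsilon>\<rfloor>) = of_int \<lfloor>x / \<epsilon>\<rfloor>"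
      using assms that by simp
    have "x / \<epsilon> - 1 < of_int \<lfloor>x / \<epsilon>\<rfloor>"
      by linarith
    then have "x - \<epsilon> \<le> \<epsilon> * of_int \<lfloor>x / \<epsilon>\<rfloor>"
      using that by (simp add: field_simps)
    moreover have "of_int \<lfloor>x / \<epsilon>\<rfloor> * \<epsilon> \<le> x"
      using pos_le_divide_eq[OF that, THEN iffD1, OF of_int_floor_le] .
    then have "\<epsilon> * of_int \<lfloor>x / \<epsilon>\<rfloor> \<le> x"
      by (simp add: mult.commute)
    ultimately show ?thesis
      by (simp add: nat_floor)
  qed
  show "\<forall>\<^sub>F \<epsilon> in at_right 0. x - \<epsilon> \<le> \<epsilon> * real (nat \<lfloor>x / \<epsilon>\<rfloor>)"
    using eventually_at_right_less[of 0] by eventually_elim (use bounds in blast)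
  show "\<forall>\<^sub>F \<epsilon> in at_right 0. \<epsilon> * real (nat \<lfloor>x / \<epsilon>\<rfloor>) \<le> x"
    using eventually_at_right_less[of 0] by eventually_elim (use bounds in blast)
  show "((\<lambda>\<epsilon>. x - \<epsilon>) \<longlongrightarrow> x) (at_right 0)"
    by (auto intro!: tendsto_eq_intros)
qed simp

lemma power_nat_floor_div_tendsto_exp:
  fixes \<rho> :: "real \<Rightarrow> real" and x :: real
  assumes lim: "((\<lambda>\<epsilon>. (1 - \<rho> \<epsilon>) / \<epsilon>) \<longlongrightarrow> l) (at_right 0)" and "0 \<le> x"
  shows "((\<lambda>\<epsilon>. \<rho> \<epsilon> ^ nat \<lfloor>x / \<epsilon>\<rfloor>) \<longlongrightarrow> exp (- l * x)) (at_right 0)"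
proof -
  have "((\<lambda>\<epsilon>. exp (\<epsilon> * real (nat \<lfloor>x / \<epsilon>\<rfloor>) * (ln (\<rho> \<epsilon>) / \<epsilon>))) \<longlongrightarrow> exp (x * - l)) (at_right 0)"
    by (intro tendsto_exp tendsto_mult tendsto_mult_nat_floor_div ln_div_tendsto_if_one_minus_div_tendsto
        lim \<open>0 \<le> x\<close>)
  moreover have "\<forall>\<^sub>F \<epsilon> in at_right 0. 0 < \<rho> \<epsilon>"
    using tendsto_one_if_one_minus_div_tendsto[OF lim] by (rule order_tendstoD) simp
  then have "\<forall>\<^sub>F \<epsilon> in at_right 0.
      exp (\<epsilon> * real (nat \<lfloor>x / \<epsilon>\<rfloor>) * (ln (\<rho> \<epsilon>) / \<epsilon>)) = \<rho> \<epsilon> ^ nat \<lfloor>x / \<epsilon>\<rfloor>"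
    using eventually_at_right_less[of 0] by eventually_elim (simp add: exp_of_nat_mult)
  ultimately show ?thesis
    by (simp add: Lim_transform_eventually mult.commute)
qed

lemma nat_floor_div_preimage:
  fixes \<epsilon> x :: real
  assumes "0 < \<epsilon>"
  shows "(\<lambda>n::nat. \<epsilon> * real (Suc n)) -` {..x} = {..<nat \<lfloor>x / \<epsilon>\<rfloor>}"
proof (intro set_eqI)
  fix n :: nat
  have "\<epsilon> * real (Suc n) \<le> x \<longleftrightarrow> of_int (int (Suc n)) \<le> x / \<epsilon>"
    using assms by (simp add: pos_le_divide_eq mult.commute)
  also have "\<dots> \<longleftrightarrow> int (Suc n) \<le> \<lfloor>x / \<epsilon>\<rfloor>"
    by (rule le_floor_iff[symmetric])
  also have "\<dots> \<longleftrightarrow> n < nat \<lfloor>x / \<epsilon>\<rfloor>"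
    by (auto simp: zless_nat_eq_int_zless)
  finally show "n \<in> (\<lambda>n. \<epsilon> * real (Suc n)) -` {..x} \<longleftrightarrow> n \<in> {..<nat \<lfloor>x / \<epsilon>\<rfloor>}"
    by simp
qed

lemma cdf_scaled_holding_law:
  assumes \<epsilon>: "0 < \<epsilon>" and \<rho>: "0 \<le> P_eps q \<epsilon> m m" "P_eps q \<epsilon> m m < 1"
  shows "cdf (scaled_holding_law q \<epsilon> m) x = 1 - P_eps q \<epsilon> m m ^ nat \<lfloor>x / \<epsilon>\<rfloor>"
proof -
  define \<rho> where "\<rho> = P_eps q \<epsilon> m m"
  define G where "G = geometric_pmf (1 - \<rho>)"
  have "cdf (scaled_holding_law q \<epsilon> m) x
      = measure (measure_pmf G) ((\<lambda>n. \<epsilon> * real (Suc n)) -` {..x} \<inter> space (measure_pmf G))"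
    unfolding scaled_holding_law_def cdf_def2 G_def \<rho>_def by (rule measure_distr) auto
  also have "\<dots> = (\<Sum>n<nat \<lfloor>x / \<epsilon>\<rfloor>. pmf G n)"
    using nat_floor_div_preimage[OF \<epsilon>] by (simp add: measure_measure_pmf_finite)
  also have "\<dots> = (1 - \<rho>) * (\<Sum>n<nat \<lfloor>x / \<epsilon>\<rfloor>. \<rho> ^ n)"
    using \<rho> by (simp add: G_def \<rho>_def sum_distrib_left mult.commute)
  also have "\<dots> = 1 - \<rho> ^ nat \<lfloor>x / \<epsilon>\<rfloor>"
    by (rule one_diff_power_eq[symmetric])
  finally show ?thesis unfolding \<rho>_def .
qed

lemma cdf_exponential:
  assumes "0 < l"
  shows "cdf (density lborel (exponential_density l)) x = (if 0 \<le> x then 1 - exp (- l * x) else 0)"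
proof -
  have "cdf (density lborel (exponential_density l)) x = enn2real (emeasure (density lborel (erlang_density 0 l)) {..x})"
    by (simp add: cdf_def2 measure_def)
  also have "\<dots> = erlang_CDF 0 l x"
    using assms by (simp add: emeasure_erlang_density)
  finally show ?thesis by (simp add: erlang_CDF_0)
qed

lemma eventually_cdf_scaled_holding_law:
  fixes q :: "'k::finite \<Rightarrow> ('k \<Rightarrow> bool) \<Rightarrow> real"
  assumes q_nonneg: "\<And>i m. 0 \<le> q i m" and irred: "ctmc_irreducible (bd_rate q)"
  shows "\<forall>\<^sub>F \<epsilon> in at_right 0. cdf (scaled_holding_law q \<epsilon> m) x = 1 - P_eps q \<epsilon> m m ^ nat \<lfloor>x / \<epsilon>\<rfloor>"
proof -
  have "\<forall>\<^sub>F \<epsilon> in at_right 0. 0 < (1 - P_eps q \<epsilon> m m) / \<epsilon>"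
    using one_minus_P_eps_diag_div_tendsto[OF q_nonneg] total_rate_pos[OF q_nonneg irred]
    by (rule order_tendstoD)
  then show ?thesis
    using eventually_rates_in_unit_interval[OF q_nonneg]
  proof (rule eventually_elim2)
    fix \<epsilon> :: real
    assume "0 < (1 - P_eps q \<epsilon> m m) / \<epsilon>" and "0 < \<epsilon> \<and> (\<forall>i m. 0 \<le> \<epsilon> * q i m \<and> \<epsilon> * q i m < 1)"
    then have "0 < \<epsilon>" "0 \<le> P_eps q \<epsilon> m m" "P_eps q \<epsilon> m m < 1"
      by (auto intro: P_eps_nonneg simp: less_imp_le zero_less_divide_iff)
    then show "cdf (scaled_holding_law q \<epsilon> m) x = 1 - P_eps q \<epsilon> m m ^ nat \<lfloor>x / \<epsilon>\<rfloor>"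
      by (rule cdf_scaled_holding_law)
  qed
qed

lemma scaled_holding_law_weak_conv:
  fixes q :: "'k::finite \<Rightarrow> ('k \<Rightarrow> bool) \<Rightarrow> real"
  assumes q_nonneg: "\<And>i m. 0 \<le> q i m" and irred: "ctmc_irreducible (bd_rate q)"
  shows "weak_conv_filter (\<lambda>\<epsilon>. scaled_holding_law q \<epsilon> m)
    (density lborel (exponential_density (total_rate q m))) (at_right 0)"
  unfolding weak_conv_filter_def
proof (intro allI impI)
  fix x :: real
  define l where "l = total_rate q m"
  have l: "0 < l"
    unfolding l_def by (rule total_rate_pos[OF q_nonneg irred])
  have "((\<lambda>\<epsilon>. 1 - P_eps q \<epsilon> m m ^ nat \<lfloor>x / \<epsilon>\<rfloor>) \<longlongrightarrow> (if 0 \<le> x then 1 - exp (- l * x) else 0)) (at_right 0)"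
  proof (cases "0 \<le> x")
    case True
    then show ?thesis
      using power_nat_floor_div_tendsto_exp[OF one_minus_P_eps_diag_div_tendsto[of q m, OF q_nonneg] True]
      by (auto simp: l_def intro: tendsto_diff)
  next
    case False
    have "\<forall>\<^sub>F \<epsilon> in at_right 0. 1 - P_eps q \<epsilon> m m ^ nat \<lfloor>x / \<epsilon>\<rfloor> = 0"
      using eventually_at_right_less[of 0]
      by eventually_elim (use False in \<open>simp add: divide_neg_pos\<close>)
    then show ?thesis
      using False by (simp add: tendsto_eventually)
  qed
  then show "((\<lambda>\<epsilon>. cdf (scaled_holding_law q \<epsilon> m) x)
      \<longlongrightarrow> cdf (density lborel (exponential_density (total_rate q m))) x) (at_right 0)"
    unfolding l_def[symmetric] cdf_exponential[OF l]
    by (rule Lim_transform_eventually)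
       (use eventually_cdf_scaled_holding_law[OF q_nonneg irred, where m = m and x = x] in \<open>auto elim: eventually_mono\<close>)
qed

theorem theorem3p1:
  fixes q :: "'k::finite \<Rightarrow> ('k \<Rightarrow> bool) \<Rightarrow> real"
    and \<pi> :: "('k \<Rightarrow> bool) \<Rightarrow> real"
  assumes q_nonneg: "\<And>i m. q i m \<ge> 0"
    and irred: "ctmc_irreducible (bd_rate q)"
    and pi_pos: "\<And>m. \<pi> m > 0"
    and pi_sum: "(\<Sum>m\<in>UNIV. \<pi> m) = 1"
    and rev: "reversible (bd_rate q) \<pi>"
  shows
    "(\<forall>\<epsilon>>0. (\<forall>i m. \<epsilon> * q i m < 1) \<longrightarrow>
        dtmc_irreducible (P_eps q \<epsilon>) \<and> dtmc_aperiodic (P_eps q \<epsilon>)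
        \<and> (\<exists>!p. stationary (P_eps q \<epsilon>) p)
        \<and> limiting (P_eps q \<epsilon>) (stat_dist (P_eps q \<epsilon>)))
   \<and> (\<forall>N. is_vnorm N \<longrightarrow>
        (\<lambda>\<epsilon>. N (\<lambda>m. stat_dist (P_eps q \<epsilon>) m - \<pi> m)) \<in> O[at_right 0](\<lambda>\<epsilon>. \<epsilon>))
   \<and> (\<forall>m. weak_conv_filter (\<lambda>\<epsilon>. scaled_holding_law q \<epsilon> m)
          (density lborel (exponential_density (total_rate q m))) (at_right 0))
   \<and> (\<forall>m m'. m \<noteq> m' \<longrightarrow>
        (\<forall>i. m' = flip m i \<longrightarrow>
           ((\<lambda>\<epsilon>. jump_prob q \<epsilon> m m') \<longlongrightarrow> q i m / total_rate q m) (at_right 0))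
        \<and> ((\<forall>i. m' \<noteq> flip m i) \<longrightarrow>
           ((\<lambda>\<epsilon>. jump_prob q \<epsilon> m m') \<longlongrightarrow> 0) (at_right 0)))"
proof -
  have ergodic: "dtmc_irreducible (P_eps q \<epsilon>) \<and> dtmc_aperiodic (P_eps q \<epsilon>)
      \<and> (\<exists>!p. stationary (P_eps q \<epsilon>) p) \<and> limiting (P_eps q \<epsilon>) (stat_dist (P_eps q \<epsilon>))"
    if "0 < \<epsilon>" "\<forall>i m. \<epsilon> * q i m < 1" for \<epsilon>
    using P_eps_ergodic[OF q_nonneg irred that(1)] that(2) by blast
  have jump_flip: "((\<lambda>\<epsilon>. jump_prob q \<epsilon> m (flip m i)) \<longlongrightarrow> q i m / total_rate q m) (at_right 0)" for m i
    using jump_prob_tendsto[OF q_nonneg irred flip_neq(2)] by (simp add: bd_rate_flip)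
  have jump_other: "((\<lambda>\<epsilon>. jump_prob q \<epsilon> m m') \<longlongrightarrow> 0) (at_right 0)"
    if "m \<noteq> m'" "\<forall>i. m' \<noteq> flip m i" for m m'
    using jump_prob_tendsto[OF q_nonneg irred that(1)] bd_rate_nonadjacent[of m' m q] that by auto
  show ?thesis
    using ergodic stat_dist_P_eps_bigo[OF q_nonneg irred pi_pos pi_sum rev]
      scaled_holding_law_weak_conv[OF q_nonneg irred] jump_flip jump_other
    by blast
qed

end
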